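(* Consider noisy group testing under reverse $Z$-channel noise with parameter $\rho\in(0,1)$, $k=\Theta(p^\theta)$ defectives with $\theta\in(0,1)$, and i.i.d. Bernoulli testing with parameter $\nu>0$. Let the COMP decoder output $\hat S$ equal to the set of items that appear in no negative test. Then $P_e\to0$ as $p\to\infty$ whenever $n\ge n_{\rm COMP}(1+\eta)$ for an arbitrarily small fixed $\eta>0$, where $$n_{\rm COMP}=\frac{1}{(1-\rho)\nu e^{-\nu}}\,k\log p.$$
   Context: Setup: $p$ items, unknown defective set $S$ uniform among size-$k$ subsets of $\{1,\dots,p\}$, $p\to\infty$. Test matrix $\mathbf X\in\{0,1\}^{n\times p}$ with i.i.d. Bernoulli$(\nu/k)$ entries ($X_{ij}=1$ iff item $j$ is in test $i$). Noiseless outcome $U_i=\bigvee_{j\in S}X_{ij}$; observed outcome $Y_i$ obtained by passing $U_i$ independently through the reverse $Z$-channel: $P(Y=1|U=0)=\rho$, $P(Y=0|U=0)=1-\rho$, $P(Y=1|U=1)=1$. A test is negative if $Y_i=0$. $P_e=\mathbb P[\hat S\ne S]$. Natural logarithms. *)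

theory Defs
  imports "HOL-Probability.Probability" "HOL-Library.Landau_Symbols"
begin

text \<open>Items are 1..p, tests are 0..<n. The test matrix is X :: nat \<times> nat \<Rightarrow> bool,
  X (i,j) = True iff item j is in test i.\<close>

definition defective_set_pmf :: "nat \<Rightarrow> nat \<Rightarrow> nat set pmf" where
  "defective_set_pmf p k = pmf_of_set {S. S \<subseteq> {1..p} \<and> card S = k}"

definition test_matrix_pmf :: "nat \<Rightarrow> nat \<Rightarrow> real \<Rightarrow> nat \<Rightarrow> (nat \<times> nat \<Rightarrow> bool) pmf" where
  "test_matrix_pmf p n \<nu> k = Pi_pmf ({..<n} \<times> {1..p}) False (\<lambda>_. bernoulli_pmf (\<nu> / real k))"

definition noiseless_outcome :: "nat set \<Rightarrow> (nat \<times> nat \<Rightarrow> bool) \<Rightarrow> nat \<Rightarrow> bool" where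
  "noiseless_outcome S X i = (\<exists>j\<in>S. X (i, j))"

definition observed_pmf :: "real \<Rightarrow> nat \<Rightarrow> (nat \<Rightarrow> bool) \<Rightarrow> (nat \<Rightarrow> bool) pmf" where
  "observed_pmf \<rho> n U = Pi_pmf {..<n} False (\<lambda>i. if U i then return_pmf True else bernoulli_pmf \<rho>)"

definition comp_decoder :: "nat \<Rightarrow> nat \<Rightarrow> (nat \<times> nat \<Rightarrow> bool) \<Rightarrow> (nat \<Rightarrow> bool) \<Rightarrow> nat set" where
  "comp_decoder p n X Y = {j \<in> {1..p}. \<forall>i<n. X (i, j) \<longrightarrow> Y i}"

definition comp_error_prob :: "real \<Rightarrow> real \<Rightarrow> nat \<Rightarrow> nat \<Rightarrow> nat \<Rightarrow> real" where
  "comp_error_prob \<rho> \<nu> p k n =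
     measure_pmf.prob
       (do { S \<leftarrow> defective_set_pmf p k;
             X \<leftarrow> test_matrix_pmf p n \<nu> k;
             Y \<leftarrow> observed_pmf \<rho> n (noiseless_outcome S X);
             return_pmf (S, X, Y) })
       {(S, X, Y). comp_decoder p n X Y \<noteq> S}"

definition n_COMP :: "real \<Rightarrow> real \<Rightarrow> nat \<Rightarrow> nat \<Rightarrow> real" where
  "n_COMP \<rho> \<nu> k p = real k * ln (real p) / ((1 - \<rho>) * \<nu> * exp (- \<nu>))"

end

theory Submission
  imports Defs "HOL-Real_Asymp.Real_Asymp"
begin

text \<open>The reverse Z-channel never turns a positive test negative, so COMP always contains the
  defective set and errs only by keeping a non-defective item \<open>j\<close>. This happens iff every test
  containing \<open>j\<close> is observed positive. With \<open>q = \<nu>/k\<close>, a test contains \<open>j\<close> but no defective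
  with probability \<open>q (1 - q)^k\<close>, and is then observed negative with probability \<open>1 - \<rho>\<close>;
  the tests are independent, so by the union bound
  \<open>P\<^sub>e \<le> p (1 - (1 - \<rho>) q (1 - q)^k)^n \<le> p exp (- n (1 - \<rho>) q (1 - q)^k)\<close>.
  Since \<open>(1 - \<nu>/k)^k \<rightarrow> e\<^sup>-\<^sup>\<nu>\<close>, the exponent eventually exceeds \<open>(1 + \<eta>/2) ln p\<close> when
  \<open>n \<ge> (1 + \<eta>) n_COMP\<close>, so \<open>P\<^sub>e \<le> p\<^sup>-\<^sup>\<eta>\<^sup>/\<^sup>2 \<rightarrow> 0\<close>.\<close>

lemma Pi_pmf_Times:
  assumes "finite A" "finite B"
  shows "Pi_pmf (A \<times> B) False (\<lambda>_. d) =
         map_pmf case_prod (Pi_pmf A (\<lambda>_. False) (\<lambda>_. Pi_pmf B False (\<lambda>_. d)))"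
proof (rule pmf_eqI)
  fix g :: "'a \<times> 'b \<Rightarrow> bool"
  have "inj (case_prod :: ('a \<Rightarrow> 'b \<Rightarrow> bool) \<Rightarrow> _)"
    by (rule injI) (metis curry_case_prod)
  then have "pmf (map_pmf case_prod (Pi_pmf A (\<lambda>_. False) (\<lambda>_. Pi_pmf B False (\<lambda>_. d)))) g
      = pmf (Pi_pmf A (\<lambda>_. False) (\<lambda>_. Pi_pmf B False (\<lambda>_. d))) (curry g)"
    by (metis pmf_map_inj' case_prod_curry)
  also have "\<dots> = (if \<forall>i. i \<notin> A \<longrightarrow> curry g i = (\<lambda>_. False) then
      \<Prod>i\<in>A. (if \<forall>j. j \<notin> B \<longrightarrow> g (i, j) = False then \<Prod>j\<in>B. pmf d (g (i, j)) else 0) else 0)"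
    by (simp only: pmf_Pi assms curry_conv)
  also have "\<dots> = pmf (Pi_pmf (A \<times> B) False (\<lambda>_. d)) g"
  proof (cases "\<forall>x. x \<notin> A \<times> B \<longrightarrow> g x = False")
    case True
    have "(\<Prod>i\<in>A. \<Prod>j\<in>B. pmf d (g (i, j))) = (\<Prod>x\<in>A \<times> B. pmf d (g x))"
      by (subst prod.cartesian_product) (simp add: split_def)
    with True show ?thesis
      using assms by (auto simp: pmf_Pi fun_eq_iff)
  next
    case False
    then obtain i j where "(i, j) \<notin> A \<times> B" "g (i, j)" by auto
    then show ?thesis
      using False assms by (cases "i \<in> A") (auto simp: pmf_Pi fun_eq_iff intro!: prod_zero)
  qed
  finally show "pmf (Pi_pmf (A \<times> B) False (\<lambda>_. d)) g =
      pmf (map_pmf case_prod (Pi_pmf A (\<lambda>_. False) (\<lambda>_. Pi_pmf B False (\<lambda>_. d)))) g" by simp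
qed

lemma expectation_prod_rows_Pi_pmf_Times:
  fixes f :: "('b \<Rightarrow> bool) \<Rightarrow> real"
  assumes "finite A" "finite B"
    and "integrable (measure_pmf (Pi_pmf B False (\<lambda>_. d))) f" "\<And>r. 0 \<le> f r"
  shows "measure_pmf.expectation (Pi_pmf (A \<times> B) False (\<lambda>_. d)) (\<lambda>X. \<Prod>i\<in>A. f (curry X i))
       = measure_pmf.expectation (Pi_pmf B False (\<lambda>_. d)) f ^ card A"
proof -
  have "measure_pmf.expectation (Pi_pmf (A \<times> B) False (\<lambda>_. d)) (\<lambda>X. \<Prod>i\<in>A. f (curry X i))
      = measure_pmf.expectation (Pi_pmf A (\<lambda>_. False) (\<lambda>_. Pi_pmf B False (\<lambda>_. d)))
          (\<lambda>R. \<Prod>i\<in>A. f (R i))"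
    using assms(1,2) by (simp add: Pi_pmf_Times)
  also have "\<dots> = (\<Prod>i\<in>A. measure_pmf.expectation (Pi_pmf B False (\<lambda>_. d)) f)"
    using assms by (subst expectation_prod_Pi_pmf) auto
  finally show ?thesis by simp
qed

lemma measure_pmf_prob_bind:
  "measure_pmf.prob (bind_pmf M f) A = measure_pmf.expectation M (\<lambda>x. measure_pmf.prob (f x) A)"
proof -
  have "ennreal (measure_pmf.prob (bind_pmf M f) A) = (\<integral>\<^sup>+x. emeasure (f x) A \<partial>M)"
    by (simp add: measure_pmf.emeasure_eq_measure[symmetric])
  also have "\<dots> = (\<integral>\<^sup>+x. ennreal (measure_pmf.prob (f x) A) \<partial>M)"
    by (simp add: measure_pmf.emeasure_eq_measure)
  also have "\<dots> = ennreal (measure_pmf.expectation M (\<lambda>x. measure_pmf.prob (f x) A))"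
    by (rule nn_integral_eq_integral) (auto intro!: measure_pmf.integrable_const_bound[where B = 1])
  finally show ?thesis
    by (subst (asm) ennreal_inj) (auto intro!: Bochner_Integration.integral_nonneg)
qed

lemma prob_Pi_pmf_bernoulli_only_one:
  assumes "finite P" "S \<subseteq> P" "j \<in> P - S" "0 \<le> q" "q \<le> 1"
  shows "measure_pmf.prob (Pi_pmf P False (\<lambda>_. bernoulli_pmf q)) {r. r j \<and> (\<forall>s\<in>S. \<not> r s)}
       = q * (1 - q) ^ card S"
proof -
  have "{r. r j \<and> (\<forall>s\<in>S. \<not> r s)} = Pi P (\<lambda>x. if x = j then {True} else if x \<in> S then {False} else UNIV)"
    using assms(2,3) by (auto simp: Pi_def)
  then have "measure_pmf.prob (Pi_pmf P False (\<lambda>_. bernoulli_pmf q)) {r. r j \<and> (\<forall>s\<in>S. \<not> r s)}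
      = (\<Prod>x\<in>P. if x = j then q else if x \<in> S then 1 - q else 1)"
    using assms by (auto simp: measure_Pi_pmf_Pi measure_pmf_single intro!: prod.cong)
  also have "\<dots> = q * (\<Prod>x\<in>P - {j}. if x \<in> S then 1 - q else 1)"
    using assms(1,3) by (subst prod.remove[of _ j]) (auto intro!: prod.cong)
  also have "(\<Prod>x\<in>P - {j}. if x \<in> S then 1 - q else 1) = (1 - q) ^ card S"
    using assms by (subst prod.If_cases) (auto simp: Int_absorb1 Diff_Int_distrib2)
  finally show ?thesis .
qed

lemma prob_observed_pmf_positive_on:
  assumes "0 \<le> \<rho>" "\<rho> \<le> 1"
  shows "measure_pmf.prob (observed_pmf \<rho> n U) {Y. \<forall>i<n. T i \<longrightarrow> Y i}
       = (\<Prod>i<n. if T i \<and> \<not> U i then \<rho> else 1)"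
proof -
  have "{Y. \<forall>i<n. T i \<longrightarrow> Y i} = Pi {..<n} (\<lambda>i. if T i then {True} else UNIV)"
    by (auto simp: Pi_def)
  then show ?thesis
    using assms by (auto simp: observed_pmf_def measure_Pi_pmf_Pi measure_pmf_single intro!: prod.cong)
qed

lemma AE_observed_pmf_positive:
  "AE Y in observed_pmf \<rho> n U. \<forall>i<n. U i \<longrightarrow> Y i"
  by (rule AE_pmfI) (auto simp: observed_pmf_def set_Pi_pmf PiE_dflt_def)

lemma comp_decoder_error_imp_false_positive:
  assumes "S \<subseteq> {1..p}" "\<forall>i<n. noiseless_outcome S X i \<longrightarrow> Y i" "comp_decoder p n X Y \<noteq> S"
  shows "\<exists>j\<in>{1..p} - S. \<forall>i<n. X (i, j) \<longrightarrow> Y i"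
proof -
  have "S \<subseteq> comp_decoder p n X Y"
    using assms(1,2) by (auto simp: comp_decoder_def noiseless_outcome_def)
  with assms(3) show ?thesis
    by (auto simp: comp_decoder_def)
qed

lemma comp_error_given_matrix_le:
  assumes "S \<subseteq> {1..p}" "0 \<le> \<rho>" "\<rho> \<le> 1"
  shows "measure_pmf.prob (observed_pmf \<rho> n (noiseless_outcome S X)) {Y. comp_decoder p n X Y \<noteq> S}
       \<le> (\<Sum>j\<in>{1..p} - S. \<Prod>i<n. if X (i, j) \<and> \<not> noiseless_outcome S X i then \<rho> else 1)"
proof -
  let ?Ob = "observed_pmf \<rho> n (noiseless_outcome S X)"
  have "measure_pmf.prob ?Ob {Y. comp_decoder p n X Y \<noteq> S}
      \<le> measure_pmf.prob ?Ob (\<Union>j\<in>{1..p} - S. {Y. \<forall>i<n. X (i, j) \<longrightarrow> Y i})"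
  proof (rule measure_pmf.finite_measure_mono_AE)
    show "AE Y in ?Ob. Y \<in> {Y. comp_decoder p n X Y \<noteq> S}
        \<longrightarrow> Y \<in> (\<Union>j\<in>{1..p} - S. {Y. \<forall>i<n. X (i, j) \<longrightarrow> Y i})"
      using AE_observed_pmf_positive
      by eventually_elim (blast dest: comp_decoder_error_imp_false_positive[OF assms(1)])
  qed simp
  also have "\<dots> \<le> (\<Sum>j\<in>{1..p} - S. measure_pmf.prob ?Ob {Y. \<forall>i<n. X (i, j) \<longrightarrow> Y i})"
    by (rule measure_pmf.finite_measure_subadditive_finite) auto
  finally show ?thesis
    using assms by (simp add: prob_observed_pmf_positive_on)
qed

lemma expectation_false_positive_prob:
  assumes "S \<subseteq> {1..p}" "j \<in> {1..p} - S" "0 \<le> q" "q \<le> 1" "0 \<le> \<rho>"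
  shows "measure_pmf.expectation (Pi_pmf ({..<n} \<times> {1..p}) False (\<lambda>_. bernoulli_pmf q))
           (\<lambda>X. \<Prod>i<n. if X (i, j) \<and> \<not> noiseless_outcome S X i then \<rho> else 1)
       = (1 - (1 - \<rho>) * (q * (1 - q) ^ card S)) ^ n"
proof -
  let ?R = "Pi_pmf {1..p} False (\<lambda>_. bernoulli_pmf q)"
  define A where "A = {r. r j \<and> (\<forall>s\<in>S. \<not> r s)}"
  define h where "h r = (if r \<in> A then \<rho> else 1)" for r
  have "h = (\<lambda>r. 1 - (1 - \<rho>) * indicator A r)"
    by (auto simp: h_def fun_eq_iff indicator_def)
  then have "measure_pmf.expectation ?R h = 1 - (1 - \<rho>) * measure_pmf.prob ?R A"
    by (simp add: measure_pmf.emeasure_eq_measure)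
  also have "\<dots> = 1 - (1 - \<rho>) * (q * (1 - q) ^ card S)"
    using assms unfolding A_def by (subst prob_Pi_pmf_bernoulli_only_one) auto
  finally have Eh: "measure_pmf.expectation ?R h = \<dots>" .
  have "(\<lambda>X. \<Prod>i<n. if X (i, j) \<and> \<not> noiseless_outcome S X i then \<rho> else 1)
      = (\<lambda>X. \<Prod>i<n. h (curry X i))"
    by (auto simp: h_def A_def noiseless_outcome_def)
  moreover have "measure_pmf.expectation (Pi_pmf ({..<n} \<times> {1..p}) False (\<lambda>_. bernoulli_pmf q))
      (\<lambda>X. \<Prod>i<n. h (curry X i)) = measure_pmf.expectation ?R h ^ n"
    using assms(5)
    by (subst expectation_prod_rows_Pi_pmf_Times)
       (auto simp: h_def intro!: measure_pmf.integrable_const_bound[where B = "max 1 \<rho>"])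
  ultimately show ?thesis
    using Eh by simp
qed

text \<open>\<open>(1 - \<rho>) q (1 - q)^m\<close> is the probability that a fixed test excludes a fixed non-defective
  item when there are \<open>m\<close> defectives.\<close>

lemma exclusion_prob_bounds:
  fixes q \<rho> :: real
  assumes "0 \<le> q" "q \<le> 1" "0 \<le> \<rho>" "\<rho> \<le> 1"
  shows "0 \<le> (1 - \<rho>) * (q * (1 - q) ^ m)" "(1 - \<rho>) * (q * (1 - q) ^ m) \<le> 1"
proof -
  have "0 \<le> q * (1 - q) ^ m" "q * (1 - q) ^ m \<le> 1"
    using assms(1,2) by (simp_all add: mult_le_one power_le_one)
  then show "0 \<le> (1 - \<rho>) * (q * (1 - q) ^ m)" "(1 - \<rho>) * (q * (1 - q) ^ m) \<le> 1"
    using assms(3,4) by (simp_all add: mult_le_one)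
qed

lemma comp_error_given_defectives_le:
  assumes "S \<subseteq> {1..p}" "0 \<le> q" "q \<le> 1" "0 \<le> \<rho>" "\<rho> \<le> 1"
  shows "measure_pmf.prob (do {X \<leftarrow> Pi_pmf ({..<n} \<times> {1..p}) False (\<lambda>_. bernoulli_pmf q);
             Y \<leftarrow> observed_pmf \<rho> n (noiseless_outcome S X); return_pmf (S, X, Y)})
           {(S', X, Y). comp_decoder p n X Y \<noteq> S'}
       \<le> real p * (1 - (1 - \<rho>) * (q * (1 - q) ^ card S)) ^ n"
proof -
  let ?M = "Pi_pmf ({..<n} \<times> {1..p}) False (\<lambda>_. bernoulli_pmf q)"
  define F where "F j X = (\<Prod>i<n. if X (i, j) \<and> \<not> noiseless_outcome S X i then \<rho> else 1)" for j X
  define c where "c = 1 - (1 - \<rho>) * (q * (1 - q) ^ card S)"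
  have F_bounds: "0 \<le> F j X \<and> F j X \<le> 1" for j X
    unfolding F_def using assms by (auto intro!: prod_nonneg prod_le_1)
  have "0 \<le> c"
    using exclusion_prob_bounds(2)[OF assms(2-5)] by (simp add: c_def)
  have "measure_pmf.prob (do {X \<leftarrow> ?M; Y \<leftarrow> observed_pmf \<rho> n (noiseless_outcome S X); return_pmf (S, X, Y)})
          {(S', X, Y). comp_decoder p n X Y \<noteq> S'}
      = measure_pmf.expectation ?M (\<lambda>X. measure_pmf.prob (observed_pmf \<rho> n (noiseless_outcome S X))
           {Y. comp_decoder p n X Y \<noteq> S})"
    by (subst measure_pmf_prob_bind) (simp add: map_pmf_def[symmetric] vimage_def)
  also have "\<dots> \<le> measure_pmf.expectation ?M (\<lambda>X. \<Sum>j\<in>{1..p} - S. F j X)"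
    using F_bounds comp_error_given_matrix_le[OF assms(1,4,5)]
    by (intro Bochner_Integration.integral_mono Bochner_Integration.integrable_sum
        measure_pmf.integrable_const_bound[where B = 1]) (auto simp: F_def)
  also have "\<dots> = (\<Sum>j\<in>{1..p} - S. measure_pmf.expectation ?M (F j))"
    using F_bounds
    by (intro Bochner_Integration.integral_sum measure_pmf.integrable_const_bound[where B = 1]) auto
  also have "\<dots> = (\<Sum>j\<in>{1..p} - S. c ^ n)"
    using assms unfolding F_def c_def by (intro sum.cong refl expectation_false_positive_prob) auto
  also have "\<dots> = real (card ({1..p} - S)) * c ^ n"
    by simp
  also have "\<dots> \<le> real p * c ^ n"
    using \<open>0 \<le> c\<close> card_mono[of "{1..p}" "{1..p} - S"] by (intro mult_right_mono) auto
  finally show ?thesis unfolding c_def .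
qed

lemma comp_error_prob_le:
  assumes "k \<le> p" "0 \<le> \<nu> / real k" "\<nu> / real k \<le> 1" "0 \<le> \<rho>" "\<rho> \<le> 1"
  shows "comp_error_prob \<rho> \<nu> p k n
       \<le> real p * (1 - (1 - \<rho>) * (\<nu> / real k * (1 - \<nu> / real k) ^ k)) ^ n"
proof -
  let ?D = "defective_set_pmf p k"
  let ?P = "\<lambda>S. measure_pmf.prob
     (do {X \<leftarrow> Pi_pmf ({..<n} \<times> {1..p}) False (\<lambda>_. bernoulli_pmf (\<nu> / real k));
          Y \<leftarrow> observed_pmf \<rho> n (noiseless_outcome S X); return_pmf (S, X, Y)})
     {(S', X, Y). comp_decoder p n X Y \<noteq> S'}"
  have "{S. S \<subseteq> {1..p} \<and> card S = k} \<noteq> {}"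
    using obtain_subset_with_card_n[of k "{1..p}"] assms(1) by auto
  then have supp: "set_pmf ?D = {S. S \<subseteq> {1..p} \<and> card S = k}"
    by (simp add: defective_set_pmf_def)
  have "comp_error_prob \<rho> \<nu> p k n = measure_pmf.expectation ?D ?P"
    unfolding comp_error_prob_def test_matrix_pmf_def by (rule measure_pmf_prob_bind)
  also have "\<dots> \<le> real p * (1 - (1 - \<rho>) * (\<nu> / real k * (1 - \<nu> / real k) ^ k)) ^ n"
  proof (rule measure_pmf.integral_le_const)
    show "integrable (measure_pmf ?D) ?P"
      by (rule measure_pmf.integrable_const_bound[where B = 1]) auto
    show "AE S in measure_pmf ?D. ?P S \<le> real p * (1 - (1 - \<rho>) * (\<nu> / real k * (1 - \<nu> / real k) ^ k)) ^ n"
    proof (rule AE_pmfI)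
      fix S assume "S \<in> set_pmf ?D"
      then have "S \<subseteq> {1..p}" "card S = k" by (auto simp: supp)
      then show "?P S \<le> real p * (1 - (1 - \<rho>) * (\<nu> / real k * (1 - \<nu> / real k) ^ k)) ^ n"
        using assms comp_error_given_defectives_le[of S p "\<nu> / real k" \<rho> n] by simp
    qed
  qed
  finally show ?thesis .
qed

lemma comp_error_prob_le_powr:
  assumes "0 < k" "k \<le> p" "0 \<le> \<rho>" "\<rho> \<le> 1" "0 \<le> \<nu>" "\<nu> \<le> real k"
    and "(1 + \<delta>) * ln (real p) \<le> (1 - \<rho>) * (\<nu> / real k * (1 - \<nu> / real k) ^ k) * real n"
  shows "comp_error_prob \<rho> \<nu> p k n \<le> real p powr (- \<delta>)"
proof -
  define c where "c = (1 - \<rho>) * (\<nu> / real k * (1 - \<nu> / real k) ^ k)"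
  have q: "0 \<le> \<nu> / real k" "\<nu> / real k \<le> 1"
    using assms(1,5,6) by auto
  have "c \<le> 1"
    unfolding c_def using q assms(3,4) by (rule exclusion_prob_bounds(2))
  have "comp_error_prob \<rho> \<nu> p k n \<le> real p * (1 - c) ^ n"
    using comp_error_prob_le assms q by (simp add: c_def)
  also have "\<dots> \<le> real p * exp (- c) ^ n"
    using \<open>c \<le> 1\<close> exp_ge_add_one_self[of "- c"] by (intro mult_left_mono power_mono) auto
  also have "\<dots> = real p * exp (- (c * real n))"
    by (simp add: exp_of_nat_mult[symmetric] mult.commute)
  also have "\<dots> \<le> exp (ln (real p)) * exp (- ((1 + \<delta>) * ln (real p)))"
    using assms(1,2,7) by (simp add: c_def)
  also have "\<dots> = exp (- \<delta> * ln (real p))"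
    by (simp add: exp_add[symmetric] algebra_simps)
  also have "\<dots> = real p powr (- \<delta>)"
    using assms(1,2) by (simp add: powr_def)
  finally show ?thesis .
qed

lemma comp_error_prob_le_powr_of_n_COMP:
  assumes "0 < k" "k \<le> p" "0 \<le> \<rho>" "\<rho> < 1" "0 < \<nu>" "\<nu> \<le> real k"
    and "1 + \<delta> \<le> (1 + \<eta>) * ((1 - \<nu> / real k) ^ k * exp \<nu>)"
    and "(1 + \<eta>) * n_COMP \<rho> \<nu> k p \<le> real n"
  shows "comp_error_prob \<rho> \<nu> p k n \<le> real p powr (- \<delta>)"
proof (rule comp_error_prob_le_powr)
  let ?c = "(1 - \<rho>) * (\<nu> / real k * (1 - \<nu> / real k) ^ k)"
  have "0 \<le> ?c"
    using assms(1,3-6) by (intro exclusion_prob_bounds(1)) auto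
  have "(1 + \<delta>) * ln (real p) \<le> (1 + \<eta>) * ((1 - \<nu> / real k) ^ k * exp \<nu>) * ln (real p)"
    using assms(1,2,7) by (intro mult_right_mono) auto
  also have "\<dots> = ?c * ((1 + \<eta>) * n_COMP \<rho> \<nu> k p)"
    using assms(1,4,5) by (simp add: n_COMP_def exp_minus field_simps)
  also have "\<dots> \<le> ?c * real n"
    using assms(8) \<open>0 \<le> ?c\<close> by (rule mult_left_mono)
  finally show "(1 + \<delta>) * ln (real p) \<le> ?c * real n" .
qed (use assms in auto)

lemma eventually_le_of_bigtheta_powr:
  fixes k :: "nat \<Rightarrow> nat"
  assumes "\<theta> < 1" "(\<lambda>p. real (k p)) \<in> \<Theta>(\<lambda>p. real p powr \<theta>)"
  shows "eventually (\<lambda>p. k p \<le> p) sequentially"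
proof -
  have "(\<lambda>p. real p powr \<theta>) \<in> o(\<lambda>p. real p)"
    using assms(1) by real_asymp
  with assms(2) have "(\<lambda>p. real (k p)) \<in> o(\<lambda>p. real p)"
    by (rule landau_o.big_small_trans[OF bigthetaD1])
  from landau_o.smallD[OF this zero_less_one] show ?thesis
    by simp
qed

lemma filterlim_at_top_of_bigtheta_powr:
  fixes k :: "nat \<Rightarrow> nat"
  assumes "0 < \<theta>" "(\<lambda>p. real (k p)) \<in> \<Theta>(\<lambda>p. real p powr \<theta>)"
  shows "filterlim k at_top sequentially"
proof -
  have "(\<lambda>_. 1) \<in> o(\<lambda>p. real p powr \<theta>)"
    using assms(1) by real_asymp
  then have "(\<lambda>_. 1) \<in> o(\<lambda>p. real (k p))"
    using assms(2) by (metis landau_o.small_big_trans bigthetaD1 bigtheta_sym)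
  then have "filterlim (\<lambda>p. real (k p)) at_infinity sequentially"
    by (simp add: smallomega_1_conv_filterlim[symmetric] smallomega_iff_smallo)
  then show ?thesis
    by (auto dest: filterlim_at_infinity_imp_norm_at_top
        simp: filterlim_sequentially_iff_filterlim_real)
qed

theorem lemma1:
  fixes \<rho> \<theta> \<nu> \<eta> :: real and k n :: "nat \<Rightarrow> nat"
  assumes "0 < \<rho>" "\<rho> < 1"
    and "0 < \<theta>" "\<theta> < 1"
    and "0 < \<nu>"
    and "0 < \<eta>"
    and "(\<lambda>p. real (k p)) \<in> \<Theta>(\<lambda>p. real p powr \<theta>)"
    and "eventually (\<lambda>p. real (n p) \<ge> (1 + \<eta>) * n_COMP \<rho> \<nu> (k p) p) sequentially"
  shows "(\<lambda>p. comp_error_prob \<rho> \<nu> p (k p) (n p)) \<longlonglongrightarrow> 0"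
proof -
  have k_top: "filterlim k at_top sequentially"
    using assms(3,7) by (rule filterlim_at_top_of_bigtheta_powr)
  have "(\<lambda>p. (1 - \<nu> / real (k p)) ^ k p) \<longlonglongrightarrow> exp (- \<nu>)"
    using filterlim_compose[OF tendsto_exp_limit_sequentially[of "- \<nu>"] k_top] by simp
  then have "(\<lambda>p. (1 + \<eta>) * ((1 - \<nu> / real (k p)) ^ k p * exp \<nu>))
      \<longlonglongrightarrow> (1 + \<eta>) * (exp (- \<nu>) * exp \<nu>)"
    by (intro tendsto_mult tendsto_const)
  then have "eventually (\<lambda>p. 1 + \<eta> / 2 < (1 + \<eta>) * ((1 - \<nu> / real (k p)) ^ k p * exp \<nu>)) sequentially"
    by (rule order_tendstoD(1)) (use assms(6) in \<open>simp add: exp_minus\<close>)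
  moreover have "eventually (\<lambda>p. max 1 \<nu> \<le> real (k p)) sequentially"
    using k_top unfolding filterlim_sequentially_iff_filterlim_real filterlim_at_top by blast
  ultimately have bound: "eventually (\<lambda>p. comp_error_prob \<rho> \<nu> p (k p) (n p) \<le> real p powr (- (\<eta> / 2)))
      sequentially"
    using eventually_le_of_bigtheta_powr[OF assms(4,7)] assms(8)
    by eventually_elim (rule comp_error_prob_le_powr_of_n_COMP, use assms(1,2,5) in auto)
  have nonneg: "eventually (\<lambda>p. 0 \<le> comp_error_prob \<rho> \<nu> p (k p) (n p)) sequentially"
    by (simp add: comp_error_prob_def)
  have "(\<lambda>p. real p powr (- (\<eta> / 2))) \<longlonglongrightarrow> 0"
    using assms(6) by (intro tendsto_neg_powr filterlim_real_sequentially) simp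
  then show ?thesis
    by (rule tendsto_sandwich[OF nonneg bound tendsto_const])
qed

end
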